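(* For all $n\ge0$, $b\ge1$ and $\Re(s)\ge0$, $$e^*_{n,b}(s)=\frac{\mathbf{1}_{\{b\ge2\}}\,b\,e^*_{n,b-1}(s)+\mathbf{1}_{\{b=1\}}}{(n+b)(s+\rho+1)}+\frac{1}{s+\rho+1}\,\frac{n}{n+b}\,e^*_{n-1,b}(s)+\frac{\rho}{s+\rho+1}\sum_{m\ge1}q_m\,e^*_{n+m,b}(s),$$ with the convention $e^*_{-1,b}(s)\equiv0$ for all $b\ge1$.
   Context: Queueing model: an $M^{[X]}/M/1$ processor-sharing queue. Batches of jobs arrive according to a Poisson process with rate $\rho>0$; batch sizes are i.i.d. with $\mathbb{P}(B=b)=q_b>0$, $\sum_{b\ge1}q_b=1$; each job requires an exponentially distributed service with mean $1$; the unit server capacity is shared equally among all jobs present; all interarrival times, batch sizes and service requirements are mutually independent. For $n\ge0$, $b\ge1$, $\Omega_{n,b}$ denotes the sojourn time of a tagged batch (time between its arrival and the departure of the last of its jobs) given that there are $n$ jobs in the system at its arrival and the batch has $b$ jobs, and $e^*_{n,b}(s)=\mathbb{E}(e^{-s\Omega_{n,b}})$. *)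

theory Defs
  imports "HOL-Probability.Probability"
begin

text \<open>Tagged-batch Markov model of the M^[X]/M/1 processor-sharing queue.
  State (n, b): n = number of other jobs, b = remaining jobs of the tagged batch.
  At each step, fresh independent innovations (a, d, m, u) are drawn:
  a ~ Exp(rho) time to the next batch arrival, d ~ Exp(1) time to the next
  service completion (total service rate 1 shared equally), m ~ q batch size,
  u ~ Uniform[0,1] selects which of the n+b jobs completes (each with prob
  1/(n+b)).  By memorylessness this is the exact law of the process.\<close>

type_synonym innov = "real \<times> real \<times> nat \<times> real"

definition innov_measure :: "real \<Rightarrow> nat pmf \<Rightarrow> innov measure" where
  "innov_measure \<rho> q =
     density lborel (\<lambda>x. ennreal (exponential_density \<rho> x)) \<Otimes>\<^sub>M
     (density lborel (\<lambda>x. ennreal (exponential_density 1 x)) \<Otimes>\<^sub>M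
     (measure_pmf q \<Otimes>\<^sub>M uniform_measure lborel {0..1}))"

definition path_measure :: "real \<Rightarrow> nat pmf \<Rightarrow> innov stream measure" where
  "path_measure \<rho> q = stream_space (innov_measure \<rho> q)"

fun ps_step :: "nat \<times> nat \<Rightarrow> innov \<Rightarrow> nat \<times> nat" where
  "ps_step (n, b) (a, d, m, u) =
     (if a < d then (n + m, b)
      else if u < real b / real (n + b) then (n, b - 1)
      else (n - 1, b))"

fun ps_state :: "nat \<Rightarrow> nat \<Rightarrow> innov stream \<Rightarrow> nat \<Rightarrow> nat \<times> nat" where
  "ps_state n b \<omega> 0 = (n, b)"
| "ps_state n b \<omega> (Suc k) = ps_step (ps_state n b \<omega> k) (\<omega> !! k)"

text \<open>Holding time of step k is min(a_k, d_k); the sojourn time is the total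
  time spent before the tagged batch has no jobs left (possibly infinite).\<close>
definition sojourn :: "nat \<Rightarrow> nat \<Rightarrow> innov stream \<Rightarrow> ennreal" where
  "sojourn n b \<omega> =
     (\<Sum>k. if snd (ps_state n b \<omega> k) \<noteq> 0
           then ennreal (min (fst (\<omega> !! k)) (fst (snd (\<omega> !! k)))) else 0)"

text \<open>Laplace transform e*_{n,b}(s) = E(exp(-s Omega_{n,b})), with the
  (almost surely irrelevant) convention exp(-s * infinity) = 0.\<close>
definition sojourn_LT :: "real \<Rightarrow> nat pmf \<Rightarrow> nat \<Rightarrow> nat \<Rightarrow> complex \<Rightarrow> complex" where
  "sojourn_LT \<rho> q n b s =
     (\<integral>\<omega>. (if sojourn n b \<omega> < \<infinity>
            then exp (- s * complex_of_real (enn2real (sojourn n b \<omega>))) else 0)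
      \<partial>path_measure \<rho> q)"

end

theory Submission
  imports Defs
begin

text \<open>Condition on the first transition of the tagged-batch chain.  The sojourn time is the
  holding time min a d of the first step plus the sojourn time of the chain restarted in the
  next state on the shifted innovation stream, and the stream measure is the product of the
  one-step law with the stream measure itself; so the Laplace transform factorises into the
  transform of the holding time and that of the next state.  The four innovations are
  independent, so the expectation splits into an exponential race (an arrival comes first with
  weight \<rho>/(s+\<rho>+1), a completion with weight 1/(s+\<rho>+1)) times the average over the batch
  size, respectively over the uniform selector, which hits the tagged batch with probability
  b/(n+b).  For b = 1 that completion empties the batch, whose transform is then 1.\<close>

section \<open>Integration over products and stream spaces\<close>

lemma (in prob_space) integral_stream_space:
  fixes f :: "_ \<Rightarrow> 'b::{banach, second_countable_topology}"
  assumes [measurable]: "f \<in> borel_measurable (stream_space M)"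
    and int: "integrable (stream_space M) f"
  shows "integral\<^sup>L (stream_space M) f = (\<integral>x. (\<integral>X. f (x ## X) \<partial>stream_space M) \<partial>M)"
proof -
  interpret S: sequence_space M ..
  interpret P: pair_sigma_finite M "\<Pi>\<^sub>M i::nat\<in>UNIV. M" ..
  have i1: "integrable S.S (\<lambda>X. f (to_stream X))"
    using int by (subst (asm) stream_space_eq_distr) (simp add: integrable_distr_eq)
  have i2: "integrable (M \<Otimes>\<^sub>M S.S) (\<lambda>X. f (to_stream ((\<lambda>(s, \<omega>). case_nat s \<omega>) X)))"
    using i1 by (subst (asm) S.PiM_iter[symmetric]) (simp add: integrable_distr_eq)
  have "integral\<^sup>L (stream_space M) f = (\<integral>X. f (to_stream X) \<partial>S.S)"
    by (subst stream_space_eq_distr) (simp add: integral_distr)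
  also have "\<dots> = (\<integral>X. f (to_stream ((\<lambda>(s, \<omega>). case_nat s \<omega>) X)) \<partial>(M \<Otimes>\<^sub>M S.S))"
    by (subst S.PiM_iter[symmetric]) (simp add: integral_distr)
  also have "\<dots> = (\<integral>x. \<integral>X. f (to_stream ((\<lambda>(s, \<omega>). case_nat s \<omega>) (x, X))) \<partial>S.S \<partial>M)"
    by (rule P.integral_fst'[OF i2, symmetric])
  also have "\<dots> = (\<integral>x. \<integral>X. f (x ## to_stream X) \<partial>S.S \<partial>M)"
    by (auto intro!: Bochner_Integration.integral_cong simp: to_stream_nat_case)
  also have "\<dots> = (\<integral>x. \<integral>X. f (x ## X) \<partial>stream_space M \<partial>M)"
    by (subst stream_space_eq_distr)
       (simp add: integral_distr cong: Bochner_Integration.integral_cong)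
  finally show ?thesis .
qed

lemma integral_pair_measure_mult:
  fixes f :: "'a \<Rightarrow> 'c::{real_normed_field, banach, second_countable_topology}"
    and g :: "'b \<Rightarrow> 'c"
  assumes "prob_space M1" "prob_space M2"
    and [measurable]: "f \<in> borel_measurable M1" "g \<in> borel_measurable M2"
    and bound_f: "\<And>x. norm (f x) \<le> Bf" and bound_g: "\<And>y. norm (g y) \<le> Bg"
  shows "(\<integral>z. f (fst z) * g (snd z) \<partial>(M1 \<Otimes>\<^sub>M M2)) = integral\<^sup>L M1 f * integral\<^sup>L M2 g"
proof -
  interpret P: pair_prob_space M1 M2
    using assms(1,2) by (simp add: pair_prob_space_def pair_sigma_finite_def prob_space_imp_sigma_finite)
  have "integrable (M1 \<Otimes>\<^sub>M M2) (\<lambda>z. f (fst z) * g (snd z))"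
    by (rule P.P.integrable_const_bound[where B="Bf * Bg"])
       (auto simp: norm_mult intro!: mult_mono bound_f bound_g order_trans[OF norm_ge_zero bound_f])
  then have "(\<integral>z. f (fst z) * g (snd z) \<partial>(M1 \<Otimes>\<^sub>M M2)) = (\<integral>x. \<integral>y. f x * g y \<partial>M2 \<partial>M1)"
    using P.integral_fst'[of "\<lambda>z. f (fst z) * g (snd z)"] by simp
  then show ?thesis by simp
qed

lemma integral_pair_measure_pair_mult:
  fixes F :: "'a \<Rightarrow> 'b \<Rightarrow> 'd::{real_normed_field, banach, second_countable_topology}"
    and g :: "'c \<Rightarrow> 'd"
  assumes "prob_space M1" "prob_space M2" "prob_space M3"
    and [measurable]: "case_prod F \<in> borel_measurable (M1 \<Otimes>\<^sub>M M2)" "g \<in> borel_measurable M3"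
    and bound_F: "\<And>x y. norm (F x y) \<le> BF" and bound_g: "\<And>z. norm (g z) \<le> Bg"
  shows "(\<integral>z. F (fst z) (fst (snd z)) * g (snd (snd z)) \<partial>(M1 \<Otimes>\<^sub>M (M2 \<Otimes>\<^sub>M M3)))
      = (\<integral>x. \<integral>y. F x y \<partial>M2 \<partial>M1) * integral\<^sup>L M3 g"
proof -
  have "prob_space (M2 \<Otimes>\<^sub>M M3)" by (rule prob_space_pair) fact+
  then interpret P: pair_prob_space M1 "M2 \<Otimes>\<^sub>M M3"
    using assms(1) by (simp add: pair_prob_space_def pair_sigma_finite_def prob_space_imp_sigma_finite)
  have "integrable (M1 \<Otimes>\<^sub>M (M2 \<Otimes>\<^sub>M M3)) (\<lambda>z. F (fst z) (fst (snd z)) * g (snd (snd z)))"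
    by (rule P.P.integrable_const_bound[where B="BF * Bg"])
       (auto simp: norm_mult intro!: mult_mono bound_F bound_g order_trans[OF norm_ge_zero bound_F])
  then have "(\<integral>z. F (fst z) (fst (snd z)) * g (snd (snd z)) \<partial>(M1 \<Otimes>\<^sub>M (M2 \<Otimes>\<^sub>M M3)))
       = (\<integral>x. \<integral>w. F x (fst w) * g (snd w) \<partial>(M2 \<Otimes>\<^sub>M M3) \<partial>M1)"
    using P.integral_fst'[of "\<lambda>z. F (fst z) (fst (snd z)) * g (snd (snd z))"] by simp
  also have "\<dots> = (\<integral>x. (\<integral>y. F x y \<partial>M2) * integral\<^sup>L M3 g \<partial>M1)"
  proof (rule Bochner_Integration.integral_cong[OF refl])
    fix x assume "x \<in> space M1"
    then have "F x \<in> borel_measurable M2" by measurable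
    then show "(\<integral>w. F x (fst w) * g (snd w) \<partial>(M2 \<Otimes>\<^sub>M M3)) = (\<integral>y. F x y \<partial>M2) * integral\<^sup>L M3 g"
      by (intro integral_pair_measure_mult assms(2,3)) (auto intro: bound_F bound_g)
  qed
  finally show ?thesis by simp
qed

lemma integral_measure_pmf_infsum:
  fixes f :: "'a \<Rightarrow> 'b::{banach, second_countable_topology}"
  assumes int: "integrable (measure_pmf p) f" and support: "set_pmf p \<subseteq> A"
  shows "integral\<^sup>L (measure_pmf p) f = (\<Sum>\<^sub>\<infinity>x\<in>A. pmf p x *\<^sub>R f x)"
proof -
  have int': "integrable (count_space UNIV) (\<lambda>x. pmf p x *\<^sub>R f x)"
    using int unfolding measure_pmf_eq_density by (subst (asm) integrable_density) auto
  have "integral\<^sup>L (measure_pmf p) f = (\<integral>x. pmf p x *\<^sub>R f x \<partial>count_space UNIV)"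
    unfolding measure_pmf_eq_density by (subst integral_density) auto
  also have "\<dots> = (\<Sum>\<^sub>\<infinity>x. pmf p x *\<^sub>R f x)"
    unfolding infsetsum_def[symmetric]
    by (rule infsetsum_infsum) (simp add: Infinite_Set_Sum.abs_summable_on_def int')
  also have "\<dots> = (\<Sum>\<^sub>\<infinity>x\<in>A. pmf p x *\<^sub>R f x)"
    using support by (intro infsum_cong_neutral) (auto simp: set_pmf_eq)
  finally show ?thesis .
qed

lemma integral_uniform_unit_interval_if_less:
  fixes X Y :: "'b::{banach, second_countable_topology}"
  assumes "0 \<le> c" "c \<le> 1"
  shows "(\<integral>u. (if u < c then X else Y) \<partial>uniform_measure lborel {0..1::real}) = c *\<^sub>R X + (1 - c) *\<^sub>R Y"
proof -
  let ?U = "uniform_measure lborel {0..1::real}"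
  interpret U: prob_space ?U by (rule prob_space_uniform_measure) auto
  have "{0..1} \<inter> {..<c} = {0..<c}" using assms by auto
  then have "measure ?U {..<c} = measure lborel {0..<c} / measure lborel {0..1::real}"
    by (subst measure_uniform_measure) auto
  also have "\<dots> = c" using assms by (simp add: measure_def)
  finally have measure_c: "measure ?U {..<c} = c" .
  have "has_bochner_integral ?U (\<lambda>u. indicator {..<c} u *\<^sub>R (X - Y)) (measure ?U {..<c} *\<^sub>R (X - Y))"
    by (rule has_bochner_integral_indicator)
       (auto simp: U.emeasure_finite less_top[symmetric] simp del: emeasure_uniform_measure)
  then have indicator_part: "has_bochner_integral ?U (\<lambda>u. indicator {..<c} u *\<^sub>R (X - Y)) (c *\<^sub>R (X - Y))"
    unfolding measure_c .
  have "(\<integral>u. (if u < c then X else Y) \<partial>?U) = (\<integral>u. indicator {..<c} u *\<^sub>R (X - Y) + Y \<partial>?U)"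
    by (rule Bochner_Integration.integral_cong) (auto simp: indicator_def)
  also have "\<dots> = c *\<^sub>R (X - Y) + Y"
    using indicator_part[unfolded has_bochner_integral_iff]
    by (simp add: Bochner_Integration.integral_add U.prob_space)
  finally show ?thesis by (simp add: algebra_simps)
qed

section \<open>The exponential distribution\<close>

abbreviation exponential_measure :: "real \<Rightarrow> real measure" where
  "exponential_measure l \<equiv> density lborel (\<lambda>x. ennreal (exponential_density l x))"

lemma AE_exponential_measure:
  fixes l c :: real
  shows "AE x in exponential_measure l. 0 \<le> x \<and> x \<noteq> c"
  by (subst AE_density)
     (auto intro!: eventually_mono[OF AE_lborel_singleton[of c]] simp: exponential_density_def)

lemma measure_exponential_measure_greaterThan:
  assumes l: "l > 0" and c: "c \<ge> 0"
  shows "measure (exponential_measure l) {c<..} = exp (- l * c)"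
proof -
  interpret P: prob_space "exponential_measure l"
    by (rule prob_space_exponential_density[OF l])
  have "emeasure (exponential_measure l) {..c} = erlang_CDF 0 l c"
    by (rule emeasure_erlang_density[OF l])
  then have "measure (exponential_measure l) {..c} = 1 - exp (- l * c)"
    using c l by (simp add: erlang_CDF_0 P.emeasure_eq_measure)
  moreover have "{c<..} = UNIV - {..c}" by auto
  ultimately show ?thesis using P.prob_compl[of "{..c}"] by simp
qed

lemma integral_exponential_measure_if_greater:
  fixes C :: "'b::{banach, second_countable_topology}"
  assumes l: "l > 0" and c: "c \<ge> 0"
  shows "(\<integral>x. (if c < x then C else 0) \<partial>exponential_measure l) = exp (- l * c) *\<^sub>R C"
proof -
  interpret P: prob_space "exponential_measure l"
    by (rule prob_space_exponential_density[OF l])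
  have "(\<integral>x. (if c < x then C else 0) \<partial>exponential_measure l)
      = (\<integral>x. indicator {c<..} x *\<^sub>R C \<partial>exponential_measure l)"
    by (rule Bochner_Integration.integral_cong) (auto simp: indicator_def)
  also have "\<dots> = measure (exponential_measure l) {c<..} *\<^sub>R C"
    by (intro has_bochner_integral_integral_eq has_bochner_integral_indicator)
       (auto simp: P.emeasure_finite less_top[symmetric])
  finally show ?thesis
    using measure_exponential_measure_greaterThan[OF l c] by simp
qed

lemma set_integrable_exp_neg_real:
  fixes r :: real assumes "r > 0"
  shows "set_integrable lborel (einterval 0 \<infinity>) (\<lambda>x. exp (- x * r))"
proof -
  let ?F = "\<lambda>u. (1 - exp (- u * r)) / r"
  show ?thesis
  proof (rule interval_integral_FTC_nonneg(1)[where F="?F" and A=0 and B="1/r"])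
    show "(?F has_real_derivative exp (- t * r)) (at t)" for t
      using assms by (auto intro!: derivative_eq_intros)
    show "((?F \<circ> real_of_ereal) \<longlongrightarrow> 0) (at_right 0)"
      using assms by (auto simp: zero_ereal_def ereal_tendsto_simps intro!: tendsto_eq_intros)
    have decay: "((\<lambda>t. exp (- t * r)) \<longlongrightarrow> 0) at_top"
      using assms
      by (auto intro!: exp_at_bot[THEN filterlim_compose] filterlim_tendsto_pos_mult_at_top filterlim_ident
               simp: filterlim_uminus_at_bot mult.commute[of _ r])
    show "((?F \<circ> real_of_ereal) \<longlongrightarrow> 1 / r) (at_left \<infinity>)"
      using assms unfolding ereal_tendsto_simps
      by (intro filterlim_compose[OF _ decay]) (auto intro!: tendsto_eq_intros filterlim_ident)
  qed auto
qed

lemma interval_integral_exp_neg_complex: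
  fixes z :: complex assumes z: "Re z > 0"
  shows "(LBINT x=0..\<infinity>. exp (- z * of_real x)) = 1 / z"
proof -
  have z0: "z \<noteq> 0" using z by auto
  let ?F = "\<lambda>x::real. - exp (- z * of_real x) / z"
  have "(LBINT x=0..\<infinity>. exp (- z * of_real x)) = 0 - (- 1 / z)"
  proof (rule interval_integral_FTC_integrable[where F="?F"])
    show "(?F has_vector_derivative exp (- z * of_real x)) (at x)" for x
    proof -
      have "((\<lambda>w. - exp (- z * w) / z) has_field_derivative exp (- z * of_real x)) (at (of_real x))"
        using z0 by (auto intro!: derivative_eq_intros simp: field_simps)
      then show ?thesis by (rule has_vector_derivative_real_field)
    qed
    show "set_integrable lborel (einterval 0 \<infinity>) (\<lambda>x. exp (- z * of_real x))"
      using set_integrable_exp_neg_real[OF z] unfolding set_integrable_def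
      by (rule Bochner_Integration.integrable_bound) (auto simp: norm_exp_eq_Re indicator_def)
    show "((?F \<circ> real_of_ereal) \<longlongrightarrow> - 1 / z) (at_right 0)"
      unfolding zero_ereal_def ereal_tendsto_simps
      using z0 by (auto intro!: tendsto_eq_intros)
    have decay: "((\<lambda>t::real. exp (- z * of_real t)) \<longlongrightarrow> 0) at_top"
    proof (rule tendsto_norm_zero_cancel)
      have "((\<lambda>t. exp (- t * Re z)) \<longlongrightarrow> 0) at_top"
        using z
        by (auto intro!: exp_at_bot[THEN filterlim_compose] filterlim_tendsto_pos_mult_at_top filterlim_ident
               simp: filterlim_uminus_at_bot mult.commute[of _ "Re z"])
      then show "((\<lambda>t. norm (exp (- z * of_real t))) \<longlongrightarrow> 0) at_top"
        by (simp add: norm_exp_eq_Re mult.commute)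
    qed
    show "((?F \<circ> real_of_ereal) \<longlongrightarrow> 0) (at_left \<infinity>)"
      unfolding ereal_tendsto_simps
      using tendsto_divide[OF tendsto_minus[OF decay] tendsto_const[of z]] z0 by simp
  qed (auto intro!: continuous_intros)
  then show ?thesis by simp
qed

lemma laplace_exponential_measure:
  fixes w :: complex
  assumes l: "l > 0" and w: "Re w \<ge> 0"
  shows "(\<integral>x. exp (- w * of_real x) \<partial>exponential_measure l) = of_real l / (w + of_real l)"
proof -
  have einterval: "einterval 0 \<infinity> = {0::real<..}"
    by (metis einterval_eq_Ici zero_ereal_def)
  have "(\<integral>x. exp (- w * of_real x) \<partial>exponential_measure l)
      = (\<integral>x. exponential_density l x *\<^sub>R exp (- w * of_real x) \<partial>lborel)"
    by (rule integral_density) (auto simp: exponential_density_nonneg[OF l])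
  also have "\<dots> = (\<integral>x. of_real l * (indicator (einterval 0 \<infinity>) x *\<^sub>R exp (- (w + of_real l) * of_real x)) \<partial>lborel)"
  proof (rule integral_cong_AE)
    show "AE x in lborel. exponential_density l x *\<^sub>R exp (- w * of_real x)
        = of_real l * (indicator (einterval 0 \<infinity>) x *\<^sub>R exp (- (w + of_real l) * of_real x))"
      using AE_lborel_singleton[of "0::real"]
      by eventually_elim
         (auto simp: exponential_density_def indicator_def scaleR_conv_of_real einterval
            exp_of_real[symmetric] exp_add[symmetric] algebra_simps)
  qed auto
  also have "\<dots> = of_real l * (\<integral>x. indicator (einterval 0 \<infinity>) x *\<^sub>R exp (- (w + of_real l) * of_real x) \<partial>lborel)"
    by (rule integral_mult_right_zero)
  also have "\<dots> = of_real l * (LBINT x=0..\<infinity>. exp (- (w + of_real l) * of_real x))"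
    by (simp add: interval_lebesgue_integral_def set_lebesgue_integral_def)
  also have "\<dots> = of_real l / (w + of_real l)"
    using l w by (subst interval_integral_exp_neg_complex) auto
  finally show ?thesis .
qed

text \<open>Laplace weights of the two outcomes of a race between exponential clocks ringing at times
  a and d.  They are cut off outside the nonnegative quadrant, a null set, so that they are
  bounded.\<close>

definition race_first :: "complex \<Rightarrow> real \<Rightarrow> real \<Rightarrow> complex" where
  "race_first s a d = (if 0 \<le> a \<and> a < d then exp (- s * of_real a) else 0)"

definition race_second :: "complex \<Rightarrow> real \<Rightarrow> real \<Rightarrow> complex" where
  "race_second s a d = (if 0 \<le> d \<and> d \<le> a then exp (- s * of_real d) else 0)"

lemma measurable_race_first[measurable]:
  "case_prod (race_first s) \<in> borel_measurable (borel \<Otimes>\<^sub>M borel)"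
  unfolding race_first_def[abs_def] by measurable

lemma measurable_race_second[measurable]:
  "case_prod (race_second s) \<in> borel_measurable (borel \<Otimes>\<^sub>M borel)"
  unfolding race_second_def[abs_def] by measurable

lemma norm_race_le_1:
  assumes "Re s \<ge> 0"
  shows "norm (race_first s a d) \<le> 1" "norm (race_second s a d) \<le> 1"
  using assms by (auto simp: race_first_def race_second_def norm_exp_eq_Re)

lemma integral_race_first:
  fixes s :: complex
  assumes \<alpha>: "\<alpha> > 0" and \<beta>: "\<beta> > 0" and s: "Re s \<ge> 0"
  shows "(\<integral>a. \<integral>d. race_first s a d \<partial>exponential_measure \<beta> \<partial>exponential_measure \<alpha>)
       = of_real \<alpha> / (s + of_real \<alpha> + of_real \<beta>)"
proof -
  interpret B: prob_space "exponential_measure \<beta>" by (rule prob_space_exponential_density[OF \<beta>])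
  have inner: "(\<integral>d. race_first s a d \<partial>exponential_measure \<beta>) = exp (- (s + of_real \<beta>) * of_real a)"
    if "a \<ge> 0" for a
    using integral_exponential_measure_if_greater[OF \<beta> that, of "exp (- s * of_real a)"] that
    by (simp add: race_first_def scaleR_conv_of_real exp_of_real[symmetric] exp_add[symmetric]
        algebra_simps)
  have "(\<integral>a. \<integral>d. race_first s a d \<partial>exponential_measure \<beta> \<partial>exponential_measure \<alpha>)
      = (\<integral>a. exp (- (s + of_real \<beta>) * of_real a) \<partial>exponential_measure \<alpha>)"
  proof (rule integral_cong_AE)
    show "AE a in exponential_measure \<alpha>.
        (\<integral>d. race_first s a d \<partial>exponential_measure \<beta>) = exp (- (s + of_real \<beta>) * of_real a)"
      using AE_exponential_measure[where l=\<alpha> and c=0] by eventually_elim (rule inner, simp)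
  qed measurable
  also have "\<dots> = of_real \<alpha> / (s + of_real \<alpha> + of_real \<beta>)"
    using \<alpha> \<beta> s by (subst laplace_exponential_measure) (auto simp: add_ac)
  finally show ?thesis .
qed

lemma integral_race_second:
  fixes s :: complex
  assumes \<alpha>: "\<alpha> > 0" and \<beta>: "\<beta> > 0" and s: "Re s \<ge> 0"
  shows "(\<integral>a. \<integral>d. race_second s a d \<partial>exponential_measure \<beta> \<partial>exponential_measure \<alpha>)
       = of_real \<beta> / (s + of_real \<alpha> + of_real \<beta>)"
proof -
  interpret P: pair_prob_space "exponential_measure \<alpha>" "exponential_measure \<beta>"
    using \<alpha> \<beta> by (simp add: pair_prob_space_def pair_sigma_finite_def prob_space_imp_sigma_finite
        prob_space_exponential_density)
  have "integrable (exponential_measure \<alpha> \<Otimes>\<^sub>M exponential_measure \<beta>) (case_prod (race_second s))"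
    by (rule P.P.integrable_const_bound[where B=1]) (auto simp: norm_race_le_1 s split: prod.split)
  then have "(\<integral>a. \<integral>d. race_second s a d \<partial>exponential_measure \<beta> \<partial>exponential_measure \<alpha>)
      = (\<integral>d. \<integral>a. race_second s a d \<partial>exponential_measure \<alpha> \<partial>exponential_measure \<beta>)"
    by (rule P.Fubini_integral[symmetric])
  also have "\<dots> = (\<integral>d. exp (- (s + of_real \<alpha>) * of_real d) \<partial>exponential_measure \<beta>)"
  proof (rule integral_cong_AE)
    have inner: "(\<integral>a. race_second s a d \<partial>exponential_measure \<alpha>) = exp (- (s + of_real \<alpha>) * of_real d)"
      if "d \<ge> 0" for d
    proof -
      have "(\<integral>a. race_second s a d \<partial>exponential_measure \<alpha>)
          = (\<integral>a. (if d < a then exp (- s * of_real d) else 0) \<partial>exponential_measure \<alpha>)"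
      proof (rule integral_cong_AE)
        show "AE a in exponential_measure \<alpha>.
            race_second s a d = (if d < a then exp (- s * of_real d) else 0)"
          using AE_exponential_measure[where l=\<alpha> and c=d]
          by eventually_elim (use that in \<open>auto simp: race_second_def\<close>)
      qed (auto simp: race_second_def)
      then show ?thesis
        using integral_exponential_measure_if_greater[OF \<alpha> that, of "exp (- s * of_real d)"]
        by (simp add: scaleR_conv_of_real exp_of_real[symmetric] exp_add[symmetric] algebra_simps)
    qed
    show "AE d in exponential_measure \<beta>.
        (\<integral>a. race_second s a d \<partial>exponential_measure \<alpha>) = exp (- (s + of_real \<alpha>) * of_real d)"
      using AE_exponential_measure[where l=\<beta> and c=0] by eventually_elim (rule inner, simp)
  qed (auto intro!: P.M1.borel_measurable_lebesgue_integral)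
  also have "\<dots> = of_real \<beta> / (s + of_real \<alpha> + of_real \<beta>)"
    using \<alpha> \<beta> s by (subst laplace_exponential_measure) (auto simp: add_ac)
  finally show ?thesis .
qed

section \<open>The innovation measure\<close>

lemma prob_space_innov_measure: "\<rho> > 0 \<Longrightarrow> prob_space (innov_measure \<rho> q)"
  unfolding innov_measure_def
  by (intro prob_space_pair prob_space_exponential_density prob_space_measure_pmf
        prob_space_uniform_measure) auto

lemma measurable_innov_components[measurable]:
  "fst \<in> borel_measurable (innov_measure \<rho> q)"
  "(\<lambda>x. fst (snd x)) \<in> borel_measurable (innov_measure \<rho> q)"
  "(\<lambda>x. fst (snd (snd x))) \<in> innov_measure \<rho> q \<rightarrow>\<^sub>M count_space UNIV"
  "(\<lambda>x. snd (snd (snd x))) \<in> borel_measurable (innov_measure \<rho> q)"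
  unfolding innov_measure_def by measurable

lemma AE_innov_measure_nonneg:
  assumes "\<rho> > 0"
  shows "AE x in innov_measure \<rho> q. 0 \<le> fst x \<and> 0 \<le> fst (snd x)"
proof -
  let ?W = "measure_pmf q \<Otimes>\<^sub>M uniform_measure lborel {0..1::real}"
  have "prob_space ?W"
    by (intro prob_space_pair prob_space_measure_pmf prob_space_uniform_measure) auto
  then interpret DW: pair_prob_space "exponential_measure 1" ?W
    by (simp add: pair_prob_space_def pair_sigma_finite_def prob_space_imp_sigma_finite
        prob_space_exponential_density)
  interpret ADW: pair_prob_space "exponential_measure \<rho>" "exponential_measure 1 \<Otimes>\<^sub>M ?W"
    using assms DW.P.prob_space_axioms
    by (simp add: pair_prob_space_def pair_sigma_finite_def prob_space_imp_sigma_finite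
        prob_space_exponential_density)
  have inner: "AE w in exponential_measure 1 \<Otimes>\<^sub>M ?W. 0 \<le> fst w"
  proof (rule DW.AE_pair_measure)
    show "AE d in exponential_measure 1. AE y in ?W. 0 \<le> fst (d, y)"
      using AE_exponential_measure[where l=1 and c=0] by eventually_elim simp
  qed measurable
  show ?thesis
    unfolding innov_measure_def
  proof (rule ADW.AE_pair_measure)
    show "AE a in exponential_measure \<rho>. AE w in exponential_measure 1 \<Otimes>\<^sub>M ?W.
        0 \<le> fst (a, w) \<and> 0 \<le> fst (snd (a, w))"
      using AE_exponential_measure[where l=\<rho> and c=0] by eventually_elim (use inner in simp)
  qed measurable
qed

lemma integral_innov_measure_mult:
  fixes F :: "real \<Rightarrow> real \<Rightarrow> complex" and g :: "nat \<Rightarrow> complex" and h :: "real \<Rightarrow> complex"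
  assumes \<rho>: "\<rho> > 0"
    and [measurable]: "case_prod F \<in> borel_measurable (borel \<Otimes>\<^sub>M borel)" "h \<in> borel_measurable borel"
    and bound_F: "\<And>a d. norm (F a d) \<le> BF" and bound_g: "\<And>m. norm (g m) \<le> Bg"
    and bound_h: "\<And>u. norm (h u) \<le> Bh"
  shows "(\<integral>x. F (fst x) (fst (snd x)) * (g (fst (snd (snd x))) * h (snd (snd (snd x)))) \<partial>innov_measure \<rho> q)
    = (\<integral>a. \<integral>d. F a d \<partial>exponential_measure 1 \<partial>exponential_measure \<rho>)
      * ((\<integral>m. g m \<partial>measure_pmf q) * (\<integral>u. h u \<partial>uniform_measure lborel {0..1::real}))"
proof -
  have U: "prob_space (uniform_measure lborel {0..1::real})"
    by (rule prob_space_uniform_measure) auto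
  have "case_prod F \<in> borel_measurable (exponential_measure \<rho> \<Otimes>\<^sub>M exponential_measure 1)"
    by measurable
  then have "(\<integral>x. F (fst x) (fst (snd x)) * (\<lambda>w. g (fst w) * h (snd w)) (snd (snd x)) \<partial>innov_measure \<rho> q)
    = (\<integral>a. \<integral>d. F a d \<partial>exponential_measure 1 \<partial>exponential_measure \<rho>)
      * (\<integral>w. g (fst w) * h (snd w) \<partial>(measure_pmf q \<Otimes>\<^sub>M uniform_measure lborel {0..1}))"
    unfolding innov_measure_def
    by (intro integral_pair_measure_pair_mult[where BF=BF and Bg="Bg * Bh"]
        prob_space_exponential_density prob_space_pair prob_space_measure_pmf U \<rho> bound_F)
       (auto simp: norm_mult intro!: mult_mono bound_g bound_h order_trans[OF norm_ge_zero bound_g])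
  moreover have "(\<integral>w. g (fst w) * h (snd w) \<partial>(measure_pmf q \<Otimes>\<^sub>M uniform_measure lborel {0..1}))
      = (\<integral>m. g m \<partial>measure_pmf q) * (\<integral>u. h u \<partial>uniform_measure lborel {0..1})"
    by (rule integral_pair_measure_mult[OF prob_space_measure_pmf U]) (auto intro: bound_g bound_h)
  ultimately show ?thesis by simp
qed

section \<open>Paths of the tagged-batch chain\<close>

lemma ps_step_fst_snd:
  "ps_step p x = (if fst x < fst (snd x) then (fst p + fst (snd (snd x)), snd p)
      else if snd (snd (snd x)) < real (snd p) / real (fst p + snd p) then (fst p, snd p - 1)
      else (fst p - 1, snd p))"
  by (cases p; cases x) auto

lemma ps_state_Stream:
  "ps_state n b (x ## X) (Suc k) = ps_state (fst (ps_step (n, b) x)) (snd (ps_step (n, b) x)) X k"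
  by (induction k) auto

lemma snd_ps_state_empty_batch: "snd (ps_state n 0 X k) = 0"
proof (induction k)
  case (Suc k)
  then show ?case by (cases "ps_state n 0 X k"; cases "X !! k") auto
qed simp

lemma sojourn_empty_batch: "sojourn n 0 X = 0"
  unfolding sojourn_def by (simp add: snd_ps_state_empty_batch)

lemma sojourn_Stream:
  assumes "b \<noteq> 0"
  shows "sojourn n b (x ## X) = ennreal (min (fst x) (fst (snd x)))
     + sojourn (fst (ps_step (n, b) x)) (snd (ps_step (n, b) x)) X"
proof -
  define f where "f k = (if snd (ps_state n b (x ## X) k) \<noteq> 0
           then ennreal (min (fst ((x ## X) !! k)) (fst (snd ((x ## X) !! k)))) else 0)" for k
  have "f sums ((\<Sum>k. f (Suc k)) + f 0)"
    by (intro sums_Suc summable_sums) simp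
  then have "suminf f = f 0 + (\<Sum>k. f (Suc k))"
    by (simp add: sums_unique[symmetric] add.commute)
  then show ?thesis
    using assms unfolding sojourn_def f_def by (simp only: ps_state_Stream snth_Stream) simp
qed

lemma measurable_ps_step[measurable]:
  "(\<lambda>x. ps_step p x) \<in> innov_measure \<rho> q \<rightarrow>\<^sub>M count_space UNIV"
  unfolding ps_step_fst_snd by measurable

lemma measurable_ps_state[measurable]:
  "(\<lambda>\<omega>. ps_state n b \<omega> k) \<in> stream_space (innov_measure \<rho> q) \<rightarrow>\<^sub>M count_space UNIV"
proof (induction k)
  case (Suc k)
  have "(\<lambda>\<omega>. (\<lambda>p \<omega>. ps_step p (\<omega> !! k)) (ps_state n b \<omega> k) \<omega>)
          \<in> stream_space (innov_measure \<rho> q) \<rightarrow>\<^sub>M count_space UNIV"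
    by (rule measurable_compose_countable'[OF _ Suc]) auto
  then show ?case by simp
qed simp

lemma measurable_sojourn[measurable]:
  "sojourn n b \<in> borel_measurable (stream_space (innov_measure \<rho> q))"
  unfolding sojourn_def[abs_def] by measurable

section \<open>The first-step equation\<close>

definition exp_sojourn :: "complex \<Rightarrow> nat \<Rightarrow> nat \<Rightarrow> innov stream \<Rightarrow> complex" where
  "exp_sojourn s n b \<omega> = (if sojourn n b \<omega> < \<infinity>
     then exp (- s * complex_of_real (enn2real (sojourn n b \<omega>))) else 0)"

lemma sojourn_LT_eq_integral_exp_sojourn:
  "sojourn_LT \<rho> q n b s = integral\<^sup>L (stream_space (innov_measure \<rho> q)) (exp_sojourn s n b)"
  unfolding sojourn_LT_def exp_sojourn_def[abs_def] path_measure_def ..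

lemma measurable_exp_sojourn[measurable]:
  "exp_sojourn s n b \<in> borel_measurable (stream_space (innov_measure \<rho> q))"
  unfolding exp_sojourn_def[abs_def] by measurable

lemma norm_exp_sojourn_le_1: "Re s \<ge> 0 \<Longrightarrow> norm (exp_sojourn s n b \<omega>) \<le> 1"
  unfolding exp_sojourn_def by (auto simp: norm_exp_eq_Re mult_nonneg_nonneg)

lemma exp_sojourn_Stream:
  assumes "b \<noteq> 0"
  shows "exp_sojourn s n b (x ## X)
    = exp (- s * of_real (enn2real (ennreal (min (fst x) (fst (snd x))))))
      * exp_sojourn s (fst (ps_step (n, b) x)) (snd (ps_step (n, b) x)) X"
proof -
  define h where "h = ennreal (min (fst x) (fst (snd x)))"
  define T where "T = sojourn (fst (ps_step (n, b) x)) (snd (ps_step (n, b) x)) X"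
  have "sojourn n b (x ## X) = h + T"
    using assms unfolding h_def T_def by (rule sojourn_Stream)
  moreover have "h < \<infinity>" unfolding h_def by simp
  ultimately show ?thesis
    unfolding exp_sojourn_def h_def[symmetric] T_def[symmetric]
    by (cases "T < \<infinity>")
       (auto simp: enn2real_plus exp_add[symmetric] algebra_simps ennreal_add_less_top top.not_eq_extremum)
qed

lemma sojourn_LT_empty_batch:
  assumes "\<rho> > 0"
  shows "sojourn_LT \<rho> q n 0 s = 1"
proof -
  interpret I: prob_space "innov_measure \<rho> q" by (rule prob_space_innov_measure[OF assms])
  interpret S: prob_space "stream_space (innov_measure \<rho> q)" by (rule I.prob_space_stream_space)
  have "exp_sojourn s n 0 = (\<lambda>_. 1)"
    by (simp add: fun_eq_iff exp_sojourn_def sojourn_empty_batch)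
  then show ?thesis
    by (simp add: sojourn_LT_eq_integral_exp_sojourn S.prob_space)
qed

lemma norm_sojourn_LT_le_1:
  assumes "\<rho> > 0" "Re s \<ge> 0"
  shows "norm (sojourn_LT \<rho> q n b s) \<le> 1"
proof -
  interpret I: prob_space "innov_measure \<rho> q" by (rule prob_space_innov_measure[OF assms(1)])
  interpret S: prob_space "stream_space (innov_measure \<rho> q)" by (rule I.prob_space_stream_space)
  have "norm (sojourn_LT \<rho> q n b s) \<le> (\<integral>\<omega>. norm (exp_sojourn s n b \<omega>) \<partial>stream_space (innov_measure \<rho> q))"
    unfolding sojourn_LT_eq_integral_exp_sojourn by (rule integral_norm_bound)
  also have "\<dots> \<le> (\<integral>\<omega>. 1 \<partial>stream_space (innov_measure \<rho> q))"
    by (rule integral_mono)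
       (auto intro!: S.integrable_const_bound[where B=1] simp: norm_exp_sojourn_le_1 assms)
  finally show ?thesis by (simp add: S.prob_space)
qed

lemma measurable_ps_step_comp[measurable]:
  "(\<lambda>x. V (ps_step p x)) \<in> borel_measurable (innov_measure \<rho> q)"
  using measurable_compose[OF measurable_ps_step, of V] by simp

text \<open>The selector u falls below b/(n+b) exactly when the completing job belongs to the
  tagged batch.\<close>

lemma exp_holding_time_mult_ps_step:
  assumes "0 \<le> a" "0 \<le> d"
  shows "exp (- s * of_real (min a d)) * V (ps_step (n, b) (a, d, m, u))
    = race_first s a d * V (n + m, b)
      + race_second s a d * (if u < real b / real (n + b) then V (n, b - 1) else V (n - 1, b))"
  using assms by (simp add: race_first_def race_second_def min_def)

lemma integral_race_first_innov_measure:
  fixes g :: "nat \<Rightarrow> complex"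
  assumes \<rho>: "\<rho> > 0" and s: "Re s \<ge> 0" and bound_g: "\<And>m. norm (g m) \<le> B"
  shows "(\<integral>x. race_first s (fst x) (fst (snd x)) * g (fst (snd (snd x))) \<partial>innov_measure \<rho> q)
    = of_real \<rho> / (s + of_real \<rho> + 1) * (\<integral>m. g m \<partial>measure_pmf q)"
proof -
  have "(\<integral>x. race_first s (fst x) (fst (snd x)) * (g (fst (snd (snd x))) * 1) \<partial>innov_measure \<rho> q)
    = (\<integral>a. \<integral>d. race_first s a d \<partial>exponential_measure 1 \<partial>exponential_measure \<rho>)
      * ((\<integral>m. g m \<partial>measure_pmf q) * (\<integral>u. 1 \<partial>uniform_measure lborel {0..1::real}))"
    using norm_race_le_1[OF s] bound_g
    by (intro integral_innov_measure_mult[OF \<rho>, where h="\<lambda>_. 1" and BF=1 and Bg=B and Bh=1]) auto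
  then show ?thesis
    unfolding integral_race_first[OF \<rho> zero_less_one s]
    by (simp add: prob_space.prob_space[OF prob_space_uniform_measure])
qed

lemma integral_race_second_innov_measure:
  fixes h :: "real \<Rightarrow> complex"
  assumes \<rho>: "\<rho> > 0" and s: "Re s \<ge> 0" and [measurable]: "h \<in> borel_measurable borel"
    and bound_h: "\<And>u. norm (h u) \<le> B"
  shows "(\<integral>x. race_second s (fst x) (fst (snd x)) * h (snd (snd (snd x))) \<partial>innov_measure \<rho> q)
    = 1 / (s + of_real \<rho> + 1) * (\<integral>u. h u \<partial>uniform_measure lborel {0..1})"
proof -
  have "(\<integral>x. race_second s (fst x) (fst (snd x)) * (1 * h (snd (snd (snd x)))) \<partial>innov_measure \<rho> q)
    = (\<integral>a. \<integral>d. race_second s a d \<partial>exponential_measure 1 \<partial>exponential_measure \<rho>)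
      * ((\<integral>m. 1 \<partial>measure_pmf q) * (\<integral>u. h u \<partial>uniform_measure lborel {0..1}))"
    using norm_race_le_1[OF s] bound_h
    by (intro integral_innov_measure_mult[OF \<rho>, where g="\<lambda>_. 1" and BF=1 and Bg=1 and Bh=B]) auto
  then show ?thesis
    unfolding integral_race_second[OF \<rho> zero_less_one s]
    by (simp add: measure_pmf.prob_space)
qed

lemma integral_exp_holding_time_mult_ps_step:
  fixes V :: "nat \<times> nat \<Rightarrow> complex" and n b :: nat
  assumes \<rho>: "\<rho> > 0" and s: "Re s \<ge> 0" and bound_V: "\<And>p. norm (V p) \<le> B"
  defines "c \<equiv> real b / real (n + b)"
  shows "(\<integral>x. exp (- s * of_real (min (fst x) (fst (snd x)))) * V (ps_step (n, b) x) \<partial>innov_measure \<rho> q)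
    = of_real \<rho> / (s + of_real \<rho> + 1) * (\<integral>m. V (n + m, b) \<partial>measure_pmf q)
      + 1 / (s + of_real \<rho> + 1) * (of_real c * V (n, b - 1) + of_real (1 - c) * V (n - 1, b))"
proof -
  interpret I: prob_space "innov_measure \<rho> q" by (rule prob_space_innov_measure[OF \<rho>])
  let ?select = "\<lambda>u. if u < c then V (n, b - 1) else V (n - 1, b)"
  let ?arrival = "\<lambda>x. race_first s (fst x) (fst (snd x)) * V (n + fst (snd (snd x)), b)"
  let ?completion = "\<lambda>x. race_second s (fst x) (fst (snd x)) * ?select (snd (snd (snd x)))"
  have c: "0 \<le> c" "c \<le> 1" unfolding c_def by (auto simp: divide_le_eq_1)
  have bound_select: "norm (?select u) \<le> B" for u using bound_V by simp
  have "0 \<le> B" using norm_ge_zero bound_V by (rule order_trans)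
  then have bound_terms: "norm (?arrival x) \<le> B" "norm (?completion x) \<le> B" for x
    using mult_mono[OF norm_race_le_1(1)[OF s] bound_V] mult_mono[OF norm_race_le_1(2)[OF s] bound_select]
    by (simp_all add: norm_mult)
  have arrival: "(\<integral>x. ?arrival x \<partial>innov_measure \<rho> q)
      = of_real \<rho> / (s + of_real \<rho> + 1) * (\<integral>m. V (n + m, b) \<partial>measure_pmf q)"
    by (rule integral_race_first_innov_measure[OF \<rho> s]) (rule bound_V)
  have completion: "(\<integral>x. ?completion x \<partial>innov_measure \<rho> q)
      = 1 / (s + of_real \<rho> + 1) * (\<integral>u. ?select u \<partial>uniform_measure lborel {0..1})"
    by (rule integral_race_second_innov_measure[OF \<rho> s _ bound_select]) measurable
  have "(\<integral>x. exp (- s * of_real (min (fst x) (fst (snd x)))) * V (ps_step (n, b) x) \<partial>innov_measure \<rho> q)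
      = (\<integral>x. ?arrival x + ?completion x \<partial>innov_measure \<rho> q)"
  proof (rule integral_cong_AE)
    show "AE x in innov_measure \<rho> q.
        exp (- s * of_real (min (fst x) (fst (snd x)))) * V (ps_step (n, b) x) = ?arrival x + ?completion x"
      using AE_innov_measure_nonneg[OF \<rho>]
    proof eventually_elim
      case (elim x)
      then show ?case
        using exp_holding_time_mult_ps_step[where a="fst x" and d="fst (snd x)" and m="fst (snd (snd x))"
            and u="snd (snd (snd x))" and s=s and V=V and n=n and b=b]
        by (simp add: c_def)
    qed
  qed measurable
  also have "\<dots> = (\<integral>x. ?arrival x \<partial>innov_measure \<rho> q) + (\<integral>x. ?completion x \<partial>innov_measure \<rho> q)"
    by (intro Bochner_Integration.integral_add I.integrable_const_bound[where B=B] AE_I2 bound_terms)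
       simp_all
  also have "\<dots> = of_real \<rho> / (s + of_real \<rho> + 1) * (\<integral>m. V (n + m, b) \<partial>measure_pmf q)
      + 1 / (s + of_real \<rho> + 1) * (of_real c * V (n, b - 1) + of_real (1 - c) * V (n - 1, b))"
    unfolding arrival completion integral_uniform_unit_interval_if_less[OF c]
    by (simp add: scaleR_conv_of_real)
  finally show ?thesis .
qed

lemma sojourn_LT_first_step:
  assumes \<rho>: "\<rho> > 0" and s: "Re s \<ge> 0" and b: "b \<noteq> 0"
  shows "sojourn_LT \<rho> q n b s = (\<integral>x. exp (- s * of_real (min (fst x) (fst (snd x))))
      * (case ps_step (n, b) x of (n', b') \<Rightarrow> sojourn_LT \<rho> q n' b' s) \<partial>innov_measure \<rho> q)"
proof -
  interpret I: prob_space "innov_measure \<rho> q" by (rule prob_space_innov_measure[OF \<rho>])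
  interpret S: prob_space "stream_space (innov_measure \<rho> q)" by (rule I.prob_space_stream_space)
  let ?next = "\<lambda>x. case ps_step (n, b) x of (n', b') \<Rightarrow> sojourn_LT \<rho> q n' b' s"
  have "integrable (stream_space (innov_measure \<rho> q)) (exp_sojourn s n b)"
    by (rule S.integrable_const_bound[where B=1]) (auto simp: norm_exp_sojourn_le_1 s)
  then have "sojourn_LT \<rho> q n b s
      = (\<integral>x. exp (- s * of_real (enn2real (ennreal (min (fst x) (fst (snd x)))))) * ?next x
          \<partial>innov_measure \<rho> q)"
    unfolding sojourn_LT_eq_integral_exp_sojourn
    by (subst I.integral_stream_space)
       (auto simp: exp_sojourn_Stream b sojourn_LT_eq_integral_exp_sojourn split: prod.split
             intro!: Bochner_Integration.integral_cong)
  also have "\<dots> = (\<integral>x. exp (- s * of_real (min (fst x) (fst (snd x)))) * ?next x \<partial>innov_measure \<rho> q)"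
  proof (rule integral_cong_AE)
    show "AE x in innov_measure \<rho> q.
        exp (- s * of_real (enn2real (ennreal (min (fst x) (fst (snd x)))))) * ?next x
        = exp (- s * of_real (min (fst x) (fst (snd x)))) * ?next x"
      using AE_innov_measure_nonneg[OF \<rho>] by eventually_elim simp
  qed measurable
  finally show ?thesis .
qed

theorem mainTheorem3:
  fixes \<rho> :: real and q :: "nat pmf" and n b :: nat and s :: complex
  assumes "\<rho> > 0"
    and "pmf q 0 = 0"
    and "\<forall>m\<ge>1. pmf q m > 0"
    and "b \<ge> 1"
    and "Re s \<ge> 0"
  shows "sojourn_LT \<rho> q n b s =
      ((if b \<ge> 2 then of_nat b * sojourn_LT \<rho> q n (b - 1) s else 0) + (if b = 1 then 1 else 0))
        / (of_nat (n + b) * (s + of_real \<rho> + 1))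
    + 1 / (s + of_real \<rho> + 1) * (of_nat n / of_nat (n + b)) * sojourn_LT \<rho> q (n - 1) b s
    + of_real \<rho> / (s + of_real \<rho> + 1) *
        (\<Sum>\<^sub>\<infinity>m\<in>{1..}. of_real (pmf q m) * sojourn_LT \<rho> q (n + m) b s)"
proof -
  have \<rho>: "\<rho> > 0" and s: "Re s \<ge> 0" and b: "b \<noteq> 0" using assms by auto
  let ?L = "\<lambda>n b. sojourn_LT \<rho> q n b s"
  have "set_pmf q \<subseteq> {1..}"
    using assms(2) by (auto simp: set_pmf_iff Suc_le_eq intro: gr0I)
  then have series: "(\<integral>m. ?L (n + m) b \<partial>measure_pmf q) = (\<Sum>\<^sub>\<infinity>m\<in>{1..}. of_real (pmf q m) * ?L (n + m) b)"
    using norm_sojourn_LT_le_1[OF \<rho> s]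
    by (subst integral_measure_pmf_infsum[where A="{1..}"])
       (auto intro: measure_pmf.integrable_const_bound[where B=1] simp: scaleR_conv_of_real)
  have weights: "of_real (real b / real (n + b)) = (of_nat b / of_nat (n + b) :: complex)"
    "of_real (1 - real b / real (n + b)) = (of_nat n / of_nat (n + b) :: complex)"
    using b by (simp_all add: field_simps)
  have numerator: "(if b \<ge> 2 then of_nat b * ?L n (b - 1) else 0) + (if b = 1 then 1 else 0)
      = of_nat b * ?L n (b - 1)"
    using b sojourn_LT_empty_batch[OF \<rho>] by auto
  have "?L n b = of_real \<rho> / (s + of_real \<rho> + 1) * (\<integral>m. ?L (n + m) b \<partial>measure_pmf q)
      + 1 / (s + of_real \<rho> + 1) * (of_real (real b / real (n + b)) * ?L n (b - 1)
        + of_real (1 - real b / real (n + b)) * ?L (n - 1) b)"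
    unfolding sojourn_LT_first_step[OF \<rho> s b, where q=q and n=n]
    using norm_sojourn_LT_le_1[OF \<rho> s]
    by (subst integral_exp_holding_time_mult_ps_step[OF \<rho> s, where B=1]) (auto split: prod.split)
  then show ?thesis
    unfolding numerator series weights by (simp add: algebra_simps)
qed

end
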